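(* Let $L\ge2$, $\theta\in\mathbb R$, and $w_1,\dots,w_L\in\mathbb R\setminus\{0\}$, and consider on $\mathcal F(\mathbb C^L)$ $$\mathbf H_L=\sum_{j=1}^{L-1}w_j\,i{\mathfrak b}_{2j}{\mathfrak b}_{2j+1}+w_L\,i{\mathfrak b}_{2L}{\mathfrak b}_1 .$$ Let $s_{w_j}\in\{0,1\}$ be such that $(-1)^{s_{w_j}}w_j>0$, let $s_P=\sum_{j=1}^Ls_{w_j}$, and set ${\mathfrak d}_j=\frac12({\mathfrak b}_{2j}+(-1)^{s_{w_j}}i{\mathfrak b}_{2j+1})$ for $1\le j\le L-1$ and ${\mathfrak d}_{\mathrm{bd}}=\frac12({\mathfrak b}_{2L}+(-1)^{s_{w_L}}i{\mathfrak b}_1)$. (i) If $L$ and $s_P$ have the same parity, then ${\mathfrak d}_1\cdots{\mathfrak d}_{L-1}|\Omega\rangle$ is a ground state of $\mathbf H_L$. (ii) If $L$ and $s_P$ have different parity, then ${\mathfrak d}_{\mathrm{bd}}{\mathfrak d}_1\cdots{\mathfrak d}_{L-1}|\Omega\rangle$ is a ground state of $\mathbf H_L$.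
   Context: $\mathcal F(\mathbb C^L)$ is the fermionic Fock space with CAR operators ${\mathfrak a}_j$, $j=1,\dots,L$, and vacuum $|\Omega\rangle$. Majorana operators: ${\mathfrak b}_{2j-1}=e^{i\theta/2}{\mathfrak a}_j+e^{-i\theta/2}{\mathfrak a}_j^*$, ${\mathfrak b}_{2j}=-ie^{i\theta/2}{\mathfrak a}_j+ie^{-i\theta/2}{\mathfrak a}_j^*$. In terms of the ${\mathfrak a}_j$, $\mathbf H_L=\sum_{j=1}^{L-1}w_j[-({\mathfrak a}_j^*{\mathfrak a}_{j+1}+{\mathfrak a}_{j+1}^*{\mathfrak a}_j)+e^{i\theta}{\mathfrak a}_j{\mathfrak a}_{j+1}+e^{-i\theta}{\mathfrak a}_{j+1}^*{\mathfrak a}_j^*]+w_L[-({\mathfrak a}_L^*{\mathfrak a}_1+{\mathfrak a}_1^*{\mathfrak a}_L)+e^{i\theta}{\mathfrak a}_L{\mathfrak a}_1+e^{-i\theta}{\mathfrak a}_1^*{\mathfrak a}_L^*]$. A ground state is a non-zero eigenvector for the lowest eigenvalue. *)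

theory Defs
  imports Complex_Main
begin

text \<open>Fermionic Fock space F(C^L): a vector is a coefficient function on occupation
  sets S, i.e. psi S is the coefficient of the basis vector
  a*_{s1} ... a*_{sk} |Omega>, s1 < ... < sk, S = {s1,...,sk}.\<close>

type_synonym fstate = "nat set \<Rightarrow> complex"
type_synonym fop = "fstate \<Rightarrow> fstate"

definition fock :: "nat \<Rightarrow> fstate set" where
  "fock L = {psi. \<forall>S. \<not> S \<subseteq> {1..L} \<longrightarrow> psi S = 0}"

definition vac :: fstate where
  "vac = (\<lambda>S. if S = {} then 1 else 0)"

definition jw_sign :: "nat set \<Rightarrow> nat \<Rightarrow> complex" where
  "jw_sign S j = (-1) ^ card {k \<in> S. k < j}"

definition ann :: "nat \<Rightarrow> fop" where
  "ann j psi = (\<lambda>S. if j \<notin> S then jw_sign S j * psi (insert j S) else 0)"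

definition cre :: "nat \<Rightarrow> fop" where
  "cre j psi = (\<lambda>S. if j \<in> S then jw_sign S j * psi (S - {j}) else 0)"

definition maj :: "real \<Rightarrow> nat \<Rightarrow> fop" where
  "maj \<theta> n psi =
     (if odd n then
        (\<lambda>S. exp (\<i> * of_real (\<theta>/2)) * ann ((n + 1) div 2) psi S
            + exp (- \<i> * of_real (\<theta>/2)) * cre ((n + 1) div 2) psi S)
      else
        (\<lambda>S. - \<i> * exp (\<i> * of_real (\<theta>/2)) * ann (n div 2) psi S
            + \<i> * exp (- \<i> * of_real (\<theta>/2)) * cre (n div 2) psi S))"

definition ham :: "nat \<Rightarrow> real \<Rightarrow> (nat \<Rightarrow> real) \<Rightarrow> fop" where
  "ham L \<theta> w psi =
     (\<lambda>S. (\<Sum>j=1..L-1. of_real (w j) * \<i> * maj \<theta> (2*j) (maj \<theta> (2*j+1) psi) S)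
          + of_real (w L) * \<i> * maj \<theta> (2*L) (maj \<theta> 1 psi) S)"

definition sgnbit :: "real \<Rightarrow> nat" where
  "sgnbit x = (if x > 0 then 0 else 1)"

definition sP :: "nat \<Rightarrow> (nat \<Rightarrow> real) \<Rightarrow> nat" where
  "sP L w = (\<Sum>j=1..L. sgnbit (w j))"

definition dop :: "real \<Rightarrow> (nat \<Rightarrow> real) \<Rightarrow> nat \<Rightarrow> fop" where
  "dop \<theta> w j psi = (\<lambda>S. (1/2) * (maj \<theta> (2*j) psi S
                         + (-1) ^ sgnbit (w j) * \<i> * maj \<theta> (2*j+1) psi S))"

definition dbd :: "nat \<Rightarrow> real \<Rightarrow> (nat \<Rightarrow> real) \<Rightarrow> fop" where
  "dbd L \<theta> w psi = (\<lambda>S. (1/2) * (maj \<theta> (2*L) psi S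
                         + (-1) ^ sgnbit (w L) * \<i> * maj \<theta> 1 psi S))"

fun dprod :: "real \<Rightarrow> (nat \<Rightarrow> real) \<Rightarrow> nat \<Rightarrow> fop" where
  "dprod \<theta> w 0 psi = psi"
| "dprod \<theta> w (Suc k) psi = dprod \<theta> w k (dop \<theta> w (Suc k) psi)"

definition ground_state :: "nat \<Rightarrow> fop \<Rightarrow> fstate \<Rightarrow> bool" where
  "ground_state L H psi \<longleftrightarrow> psi \<in> fock L \<and> psi \<noteq> (\<lambda>_. 0) \<and>
     (\<exists>E::real. H psi = (\<lambda>S. of_real E * psi S) \<and>
        (\<forall>phi \<in> fock L. \<forall>\<mu>::complex. phi \<noteq> (\<lambda>_. 0) \<and> H phi = (\<lambda>S. \<mu> * phi S)
              \<longrightarrow> E \<le> Re \<mu>))"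

end

theory Submission
  imports Defs
begin

text \<open>Each term \<open>i b\<^sub>m b\<^sub>n\<close> of \<open>H\<^sub>L\<close> is a unitary involution, so
  \<open>\<langle>\<phi>, H\<^sub>L \<phi>\<rangle> \<ge> -(\<Sum>\<^sub>j |w\<^sub>j|) \<parallel>\<phi>\<parallel>\<^sup>2\<close>, and an eigenvector on which every term \<open>w\<^sub>j i b\<^sub>m b\<^sub>n\<close> takes the
  value \<open>-|w\<^sub>j|\<close> is a ground state.  The operator \<open>d\<^sub>j\<close> satisfies
  \<open>i b\<^sub>2\<^sub>j b\<^sub>2\<^sub>j\<^sub>+\<^sub>1 d\<^sub>j = -(-1)\<^sup>s\<^sup>_\<^sup>j d\<^sub>j\<close> and commutes with the other bulk terms, so
  \<open>\<psi> = d\<^sub>1 \<cdots> d\<^sub>L\<^sub>-\<^sub>1 |\<Omega>\<rangle>\<close> saturates every bulk term.  The boundary term is not independent of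
  them: the product of all \<open>L\<close> terms is a scalar multiple of the fermion parity, and \<open>\<psi>\<close> has
  parity \<open>(-1)\<^sup>L\<^sup>-\<^sup>1\<close>.  Hence the boundary eigenvalue is \<open>(-1)\<^sup>L\<^sup>-\<^sup>1 \<Prod>\<^sub>j\<^sub><\<^sub>L (-1)\<^sup>s\<^sup>_\<^sup>j\<close>, which
  saturates the boundary term exactly when \<open>L\<close> and \<open>s\<^sub>P\<close> have the same parity; otherwise
  \<open>d\<^sub>b\<^sub>d\<close> flips the boundary eigenvalue while keeping the bulk ones.\<close>

section \<open>Jordan--Wigner mode operators\<close>

definition toggle :: "nat \<Rightarrow> nat set \<Rightarrow> nat set" where
  "toggle j S = (if j \<in> S then S - {j} else insert j S)"

lemma jw_sign_remove_self [simp]: "jw_sign (S - {j}) j = jw_sign S j"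
  unfolding jw_sign_def by (rule arg_cong[where f = "\<lambda>n. (-1) ^ card n"]) auto

lemma jw_sign_insert_self [simp]: "jw_sign (insert j S) j = jw_sign S j"
  unfolding jw_sign_def by (rule arg_cong[where f = "\<lambda>n. (-1) ^ card n"]) auto

lemma jw_sign_square [simp]: "jw_sign S j * jw_sign S j = 1"
  unfolding jw_sign_def by (simp add: power_mult_distrib[symmetric])

lemma norm_jw_sign [simp]: "cmod (jw_sign S j) = 1"
  unfolding jw_sign_def by (simp add: norm_power)

lemma jw_sign_nonzero [simp]: "jw_sign S j \<noteq> 0"
  unfolding jw_sign_def by simp

lemma jw_sign_insert:
  assumes "k \<noteq> j"
  shows "jw_sign (insert k S) j = (if k < j \<and> k \<notin> S then -1 else 1) * jw_sign S j"
proof (cases "k < j \<and> k \<notin> S")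
  case True
  then have "{x \<in> insert k S. x < j} = insert k {x \<in> S. x < j}" "k \<notin> {x \<in> S. x < j}"
    by auto
  moreover have "finite {x \<in> S. x < j}"
    by (rule finite_subset[of _ "{..<j}"]) auto
  ultimately show ?thesis
    using True unfolding jw_sign_def by simp
next
  case False
  then have "{x \<in> insert k S. x < j} = {x \<in> S. x < j}"
    using assms by auto
  then show ?thesis
    using False unfolding jw_sign_def by simp
qed

lemma jw_sign_remove:
  assumes "k \<noteq> j"
  shows "jw_sign (S - {k}) j = (if k < j \<and> k \<in> S then -1 else 1) * jw_sign S j"
proof (cases "k \<in> S")
  case True
  then have "jw_sign S j = jw_sign (insert k (S - {k})) j"
    by (simp add: insert_absorb)
  also have "\<dots> = (if k < j then -1 else 1) * jw_sign (S - {k}) j"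
    using jw_sign_insert[OF assms, of "S - {k}"] by simp
  finally show ?thesis
    using True by auto
qed simp

definition mode_op :: "nat \<Rightarrow> complex \<Rightarrow> complex \<Rightarrow> fop" where
  "mode_op j a b \<psi> = (\<lambda>S. a * cre j \<psi> S + b * ann j \<psi> S)"

lemma mode_op_apply:
  "mode_op j a b \<psi> S = jw_sign S j * (if j \<in> S then a * \<psi> (S - {j}) else b * \<psi> (insert j S))"
  unfolding mode_op_def cre_def ann_def by auto

lemma mode_op_mode_op_same:
  "mode_op j a b (mode_op j c d \<psi>) = (\<lambda>S. (if j \<in> S then a * d else b * c) * \<psi> S)"
  by (rule ext) (auto simp: mode_op_apply insert_absorb)

lemma mode_op_anticommute:
  assumes "j \<noteq> k"
  shows "mode_op j a b (mode_op k c d \<psi>) S = - mode_op k c d (mode_op j a b \<psi>) S"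
proof -
  have "k \<noteq> j"
    using assms by simp
  moreover have "S - {j} - {k} = S - {k} - {j}" "insert j (S - {k}) = insert j S - {k}"
    "insert k (S - {j}) = insert k S - {j}" "insert j (insert k S) = insert k (insert j S)"
    using assms by auto
  ultimately show ?thesis
    using assms
    by (cases "j < k")
       (auto simp: mode_op_apply jw_sign_insert jw_sign_remove algebra_simps)
qed

lemma mode_op_add: "mode_op j a b (\<lambda>S. f S + g S) = (\<lambda>S. mode_op j a b f S + mode_op j a b g S)"
  by (rule ext) (simp add: mode_op_apply algebra_simps)

lemma mode_op_scale: "mode_op j a b (\<lambda>S. c * f S) = (\<lambda>S. c * mode_op j a b f S)"
  by (rule ext) (simp add: mode_op_apply algebra_simps)

definition supported_in :: "nat set \<Rightarrow> fstate \<Rightarrow> bool" where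
  "supported_in A \<psi> \<longleftrightarrow> (\<forall>S. \<not> S \<subseteq> A \<longrightarrow> \<psi> S = 0)"

lemma fock_iff_supported_in: "\<psi> \<in> fock L \<longleftrightarrow> supported_in {1..L} \<psi>"
  unfolding fock_def supported_in_def by simp

lemma supported_in_vac: "supported_in A vac"
  unfolding supported_in_def vac_def by auto

lemma mode_op_supported_in:
  assumes "supported_in A \<psi>"
  shows "supported_in (insert j A) (mode_op j a b \<psi>)"
  unfolding supported_in_def
proof (intro allI impI)
  fix S
  assume "\<not> S \<subseteq> insert j A"
  then have "\<not> S - {j} \<subseteq> A" "\<not> insert j S \<subseteq> A"
    by auto
  then show "mode_op j a b \<psi> S = 0"
    using assms unfolding supported_in_def mode_op_apply by auto
qed

definition maj_cre_coeff :: "real \<Rightarrow> nat \<Rightarrow> complex" where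
  "maj_cre_coeff \<theta> n =
     (if odd n then exp (- \<i> * of_real (\<theta>/2)) else \<i> * exp (- \<i> * of_real (\<theta>/2)))"

definition maj_ann_coeff :: "real \<Rightarrow> nat \<Rightarrow> complex" where
  "maj_ann_coeff \<theta> n =
     (if odd n then exp (\<i> * of_real (\<theta>/2)) else - \<i> * exp (\<i> * of_real (\<theta>/2)))"

lemma maj_eq_mode_op: "maj \<theta> n = mode_op ((n + 1) div 2) (maj_cre_coeff \<theta> n) (maj_ann_coeff \<theta> n)"
proof (intro ext)
  fix \<psi> S
  have "even n \<Longrightarrow> n div 2 = (n + 1) div 2"
    by presburger
  then show "maj \<theta> n \<psi> S = mode_op ((n + 1) div 2) (maj_cre_coeff \<theta> n) (maj_ann_coeff \<theta> n) \<psi> S"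
    unfolding maj_def mode_op_def maj_cre_coeff_def maj_ann_coeff_def
    by (cases "odd n") (auto simp: algebra_simps)
qed

lemma exp_i_inverse: "exp (- \<i> * of_real x) * exp (\<i> * of_real x) = 1"
  by (simp add: exp_minus field_simps)

lemma maj_coeff_product: "maj_cre_coeff \<theta> n * maj_ann_coeff \<theta> n = 1"
  unfolding maj_cre_coeff_def maj_ann_coeff_def using exp_i_inverse[of "\<theta>/2"]
  by (auto simp: algebra_simps)

lemma norm_maj_cre_coeff [simp]: "cmod (maj_cre_coeff \<theta> n) = 1"
  unfolding maj_cre_coeff_def by (auto simp: norm_mult)

lemma norm_maj_ann_coeff [simp]: "cmod (maj_ann_coeff \<theta> n) = 1"
  unfolding maj_ann_coeff_def by (auto simp: norm_mult)

lemma maj_cre_coeff_nonzero [simp]: "maj_cre_coeff \<theta> n \<noteq> 0"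
  using norm_maj_cre_coeff[of \<theta> n] by (metis norm_zero zero_neq_one)

lemma maj_maj_same [simp]: "maj \<theta> n (maj \<theta> n \<psi>) = \<psi>"
  unfolding maj_eq_mode_op mode_op_mode_op_same using maj_coeff_product[of \<theta> n]
  by (auto simp: algebra_simps)

lemma maj_anticommute:
  assumes "m \<noteq> n"
  shows "maj \<theta> m (maj \<theta> n \<psi>) = (\<lambda>S. - maj \<theta> n (maj \<theta> m \<psi>) S)"
proof (cases "(m + 1) div 2 = (n + 1) div 2")
  case False
  then show ?thesis
    unfolding maj_eq_mode_op by (intro ext mode_op_anticommute)
next
  case True
  then have "odd m \<noteq> odd n"
    using assms by presburger
  then show ?thesis
    unfolding maj_eq_mode_op True mode_op_mode_op_same
    using exp_i_inverse[of "\<theta>/2"] unfolding maj_cre_coeff_def maj_ann_coeff_def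
    by (cases "odd m") (auto simp: algebra_simps)
qed

lemma maj_add: "maj \<theta> n (\<lambda>S. f S + g S) = (\<lambda>S. maj \<theta> n f S + maj \<theta> n g S)"
  unfolding maj_eq_mode_op by (rule mode_op_add)

lemma maj_scale: "maj \<theta> n (\<lambda>S. c * f S) = (\<lambda>S. c * maj \<theta> n f S)"
  unfolding maj_eq_mode_op by (rule mode_op_scale)

lemma maj_uminus: "maj \<theta> n (\<lambda>S. - f S) = (\<lambda>S. - maj \<theta> n f S)"
  using maj_scale[of \<theta> n "-1" f] by simp

lemma maj_zero: "maj \<theta> n (\<lambda>_. 0) = (\<lambda>_. 0)"
  using maj_scale[of \<theta> n 0 "\<lambda>_. 0"] by simp

lemma maj_pair_maj_commute:
  assumes "m \<noteq> p" "n \<noteq> p"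
  shows "maj \<theta> m (maj \<theta> n (maj \<theta> p \<psi>)) = maj \<theta> p (maj \<theta> m (maj \<theta> n \<psi>))"
  using assms by (simp add: maj_anticommute[of n p] maj_anticommute[of m p] maj_uminus)

lemma maj_supported_in:
  "supported_in A \<psi> \<Longrightarrow> supported_in (insert ((n + 1) div 2) A) (maj \<theta> n \<psi>)"
  unfolding maj_eq_mode_op by (rule mode_op_supported_in)

lemma maj_in_fock: "\<psi> \<in> fock L \<Longrightarrow> (n + 1) div 2 \<in> {1..L} \<Longrightarrow> maj \<theta> n \<psi> \<in> fock L"
  unfolding fock_iff_supported_in using maj_supported_in by (metis insert_absorb)

lemma maj_site_pair:
  "maj \<theta> (2*k + 1) (maj \<theta> (2*k + 2) \<psi>) = (\<lambda>S. (if Suc k \<in> S then - \<i> else \<i>) * \<psi> S)"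
proof -
  have "(2*k + 1 + 1) div 2 = Suc k" "(2*k + 2 + 1) div 2 = Suc k"
    by presburger+
  then show ?thesis
    unfolding maj_eq_mode_op using exp_i_inverse[of "\<theta>/2"]
    by (auto simp: mode_op_mode_op_same maj_cre_coeff_def maj_ann_coeff_def algebra_simps)
qed

abbreviation sgn_factor :: "real \<Rightarrow> complex" where
  "sgn_factor x \<equiv> (-1) ^ sgnbit x"

lemma sgn_factor_square: "sgn_factor x * sgn_factor x = 1"
  by (simp add: power_mult_distrib[symmetric])

definition bond :: "real \<Rightarrow> nat \<Rightarrow> nat \<Rightarrow> fop" where
  "bond \<theta> m n \<psi> = (\<lambda>S. \<i> * maj \<theta> m (maj \<theta> n \<psi>) S)"

definition dmaj :: "real \<Rightarrow> complex \<Rightarrow> nat \<Rightarrow> nat \<Rightarrow> fop" where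
  "dmaj \<theta> \<sigma> m n \<psi> = (\<lambda>S. (1/2) * (maj \<theta> m \<psi> S + \<sigma> * \<i> * maj \<theta> n \<psi> S))"

lemma dop_eq_dmaj: "dop \<theta> w j = dmaj \<theta> (sgn_factor (w j)) (2*j) (2*j + 1)"
  unfolding dop_def dmaj_def by (intro ext) simp

lemma dbd_eq_dmaj: "dbd L \<theta> w = dmaj \<theta> (sgn_factor (w L)) (2*L) 1"
  unfolding dbd_def dmaj_def by (intro ext) simp

lemma dmaj_scale: "dmaj \<theta> \<sigma> m n (\<lambda>S. c * f S) = (\<lambda>S. c * dmaj \<theta> \<sigma> m n f S)"
  unfolding dmaj_def maj_scale by (rule ext) (simp add: algebra_simps)

lemma bond_dmaj_same:
  assumes "m \<noteq> n" "\<sigma> * \<sigma> = 1"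
  shows "bond \<theta> m n (dmaj \<theta> \<sigma> m n \<psi>) = (\<lambda>S. - \<sigma> * dmaj \<theta> \<sigma> m n \<psi> S)"
proof -
  have \<sigma>\<sigma>: "\<sigma> * (\<sigma> * z) = z" for z
    using assms(2) by (simp add: mult.assoc[symmetric])
  have anti: "maj \<theta> n (maj \<theta> m \<psi>) = (\<lambda>S. - maj \<theta> m (maj \<theta> n \<psi>) S)"
    using assms(1) by (intro maj_anticommute) simp
  show ?thesis
    unfolding bond_def dmaj_def maj_scale maj_add maj_uminus anti maj_maj_same
    by (rule ext) (simp add: algebra_simps \<sigma>\<sigma>)
qed

lemma bond_dmaj_commute:
  assumes "m \<noteq> p" "n \<noteq> p" "m \<noteq> q" "n \<noteq> q"
  shows "bond \<theta> m n (dmaj \<theta> \<sigma> p q \<psi>) = dmaj \<theta> \<sigma> p q (bond \<theta> m n \<psi>)"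
  unfolding bond_def dmaj_def maj_scale maj_add maj_pair_maj_commute[OF assms(1,2)]
    maj_pair_maj_commute[OF assms(3,4)]
  by (simp add: algebra_simps)

lemma maj_pair_eq_if_bond_eq:
  assumes "bond \<theta> m n \<psi> = (\<lambda>S. c * \<psi> S)"
  shows "maj \<theta> m (maj \<theta> n \<psi>) = (\<lambda>S. - \<i> * c * \<psi> S)"
proof
  fix S
  have "maj \<theta> m (maj \<theta> n \<psi>) S = - \<i> * (\<i> * maj \<theta> m (maj \<theta> n \<psi>) S)"
    by simp
  also have "\<dots> = - \<i> * c * \<psi> S"
    using fun_cong[OF assms, of S] unfolding bond_def by simp
  finally show "maj \<theta> m (maj \<theta> n \<psi>) S = - \<i> * c * \<psi> S" .
qed

lemma dmaj_eq_maj_if_bond_eq: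
  assumes "bond \<theta> m n \<psi> = (\<lambda>S. \<sigma> * \<psi> S)" "\<sigma> * \<sigma> = 1"
  shows "dmaj \<theta> \<sigma> m n \<psi> = maj \<theta> m \<psi>"
proof
  fix S
  have "maj \<theta> m (bond \<theta> m n \<psi>) S = maj \<theta> m (\<lambda>S. \<sigma> * \<psi> S) S"
    by (simp only: assms(1))
  then have "\<i> * maj \<theta> n \<psi> S = \<sigma> * maj \<theta> m \<psi> S"
    by (simp add: bond_def maj_scale)
  then have "\<sigma> * \<i> * maj \<theta> n \<psi> S = maj \<theta> m \<psi> S"
    using assms(2) by (metis mult.assoc mult_1)
  then show "dmaj \<theta> \<sigma> m n \<psi> S = maj \<theta> m \<psi> S"
    by (simp add: dmaj_def)
qed

section \<open>Fermion parity\<close>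

definition parity_sign :: "nat \<Rightarrow> nat set \<Rightarrow> complex" where
  "parity_sign L S = (\<Prod>j\<in>{1..L}. if j \<in> S then -1 else 1)"

definition parity :: "nat \<Rightarrow> fop" where
  "parity L \<psi> = (\<lambda>S. parity_sign L S * \<psi> S)"

lemma parity_sign_toggle:
  assumes "j \<in> {1..L}"
  shows "parity_sign L (toggle j S) = - parity_sign L S"
proof -
  have "(\<Prod>k\<in>{1..L} - {j}. if k \<in> toggle j S then -1 else (1::complex))
      = (\<Prod>k\<in>{1..L} - {j}. if k \<in> S then -1 else 1)"
    by (rule prod.cong) (auto simp: toggle_def)
  then show ?thesis
    unfolding parity_sign_def
    using prod.remove[OF _ assms, of "\<lambda>k. if k \<in> toggle j S then -1 else (1::complex)"]
      prod.remove[OF _ assms, of "\<lambda>k. if k \<in> S then -1 else (1::complex)"]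
    by (auto simp: toggle_def)
qed

lemma parity_mode_op:
  assumes "j \<in> {1..L}"
  shows "parity L (mode_op j a b \<psi>) = (\<lambda>S. - mode_op j a b (parity L \<psi>) S)"
proof -
  have "parity_sign L (S - {j}) = - parity_sign L S" if "j \<in> S" for S
    using parity_sign_toggle[OF assms, of S] that by (simp add: toggle_def)
  moreover have "parity_sign L (insert j S) = - parity_sign L S" if "j \<notin> S" for S
    using parity_sign_toggle[OF assms, of S] that by (simp add: toggle_def)
  ultimately show ?thesis
    by (auto simp: fun_eq_iff parity_def mode_op_apply)
qed

lemma parity_maj:
  "(n + 1) div 2 \<in> {1..L} \<Longrightarrow> parity L (maj \<theta> n \<psi>) = (\<lambda>S. - maj \<theta> n (parity L \<psi>) S)"
  unfolding maj_eq_mode_op by (rule parity_mode_op)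

lemma parity_dmaj:
  assumes "(m + 1) div 2 \<in> {1..L}" "(n + 1) div 2 \<in> {1..L}"
  shows "parity L (dmaj \<theta> \<sigma> m n \<psi>) = (\<lambda>S. - dmaj \<theta> \<sigma> m n (parity L \<psi>) S)"
proof
  fix S
  have maj_parity: "maj \<theta> k (parity L \<psi>) S = - (parity_sign L S * maj \<theta> k \<psi> S)"
    if "(k + 1) div 2 \<in> {1..L}" for k
    using fun_cong[OF parity_maj[OF that, of \<theta> \<psi>], of S] by (simp add: parity_def)
  show "parity L (dmaj \<theta> \<sigma> m n \<psi>) S = - dmaj \<theta> \<sigma> m n (parity L \<psi>) S"
    unfolding dmaj_def maj_parity[OF assms(1)] maj_parity[OF assms(2)]
    by (simp add: parity_def algebra_simps)
qed

lemma parity_dop: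
  assumes "1 \<le> j" "j < L"
  shows "parity L (dop \<theta> w j \<psi>) = (\<lambda>S. - dop \<theta> w j (parity L \<psi>) S)"
proof -
  have "(2*j + 1) div 2 \<in> {1..L}" "(2*j + 1 + 1) div 2 \<in> {1..L}"
    using assms by auto
  then show ?thesis
    unfolding dop_eq_dmaj by (rule parity_dmaj)
qed

lemma parity_vac: "parity L vac = vac"
  unfolding parity_def vac_def parity_sign_def by auto

section \<open>The boundary bond and the parity\<close>

fun maj_string :: "real \<Rightarrow> nat \<Rightarrow> nat \<Rightarrow> fop" where
  "maj_string \<theta> s 0 \<psi> = \<psi>"
| "maj_string \<theta> s (Suc k) \<psi> = maj_string \<theta> s k (maj \<theta> (s + 2*k) (maj \<theta> (s + 2*k + 1) \<psi>))"

lemma maj_string_Suc_outer: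
  "maj_string \<theta> s (Suc k) \<psi> = maj \<theta> s (maj_string \<theta> (Suc s) k (maj \<theta> (s + 2*k + 1) \<psi>))"
  by (induction k arbitrary: \<psi>) (simp_all add: algebra_simps)

lemma maj_string_scale: "maj_string \<theta> s k (\<lambda>S. c * \<psi> S) = (\<lambda>S. c * maj_string \<theta> s k \<psi> S)"
  by (induction k arbitrary: \<psi>) (simp_all add: maj_scale)

lemma maj_string_maj_commute:
  "m \<notin> {s..<s + 2*k} \<Longrightarrow> maj_string \<theta> s k (maj \<theta> m \<psi>) = maj \<theta> m (maj_string \<theta> s k \<psi>)"
proof (induction k arbitrary: \<psi>)
  case (Suc k)
  have "maj \<theta> (s + 2*k) (maj \<theta> (s + 2*k + 1) (maj \<theta> m \<psi>))
      = maj \<theta> m (maj \<theta> (s + 2*k) (maj \<theta> (s + 2*k + 1) \<psi>))"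
    using Suc.prems by (intro maj_pair_maj_commute) auto
  moreover have "m \<notin> {s..<s + 2*k}"
    using Suc.prems by auto
  ultimately show ?case
    using Suc.IH by simp
qed simp

lemma maj_string_eigen:
  assumes "\<forall>j<k. maj \<theta> (s + 2*j) (maj \<theta> (s + 2*j + 1) \<psi>) = (\<lambda>S. c j * \<psi> S)"
  shows "maj_string \<theta> s k \<psi> = (\<lambda>S. (\<Prod>j<k. c j) * \<psi> S)"
  using assms
proof (induction k)
  case (Suc k)
  then have "maj_string \<theta> s (Suc k) \<psi> = maj_string \<theta> s k (\<lambda>S. c k * \<psi> S)"
    by simp
  also have "\<dots> = (\<lambda>S. c k * maj_string \<theta> s k \<psi> S)"
    by (rule maj_string_scale)
  finally show ?case
    using Suc by (simp add: mult_ac)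
qed simp

lemma maj_string_sites: "maj_string \<theta> 1 L \<psi> = (\<lambda>S. \<i> ^ L * parity_sign L S * \<psi> S)"
proof -
  have "maj_string \<theta> 1 k \<psi> = (\<lambda>S. (\<Prod>j<k. if Suc j \<in> S then - \<i> else \<i>) * \<psi> S)" for k
  proof (induction k arbitrary: \<psi>)
    case (Suc k)
    have idx: "1 + 2*k = 2*k + 1" "2*k + 1 + 1 = 2*k + 2"
      by simp_all
    show ?case
      unfolding maj_string.simps idx maj_site_pair Suc.IH by (simp add: mult_ac)
  qed simp
  moreover have "(\<Prod>j<L. if Suc j \<in> S then - \<i> else \<i>) = \<i> ^ L * parity_sign L S" for S
  proof -
    have "(\<Prod>j<L. if Suc j \<in> S then - \<i> else \<i>) = (\<Prod>j<L. \<i> * (if Suc j \<in> S then -1 else 1))"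
      by (rule prod.cong) auto
    then show ?thesis
      by (simp add: parity_sign_def prod.atLeast1_atMost_eq prod.distrib)
  qed
  ultimately show ?thesis
    by simp
qed

lemma maj_string_sites_split:
  "maj_string \<theta> 1 (Suc m) \<psi> = maj \<theta> 1 (maj \<theta> (2*m + 2) (maj_string \<theta> 2 m \<psi>))"
proof -
  have "maj_string \<theta> 1 (Suc m) \<psi> = maj \<theta> 1 (maj_string \<theta> 2 m (maj \<theta> (2*m + 2) \<psi>))"
    unfolding maj_string_Suc_outer by (simp add: algebra_simps numeral_2_eq_2)
  then show ?thesis
    by (simp add: maj_string_maj_commute)
qed

text \<open>The product of all bond operators is, up to a scalar, the parity: this pins down the
  boundary bond on a parity eigenvector that saturates the bulk bonds.\<close>

lemma bond_boundary_eigen: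
  assumes "L \<ge> 1"
    and parity: "parity L \<psi> = (\<lambda>S. (-1) ^ (L - 1) * \<psi> S)"
    and bulk: "\<forall>j\<in>{1..L-1}. bond \<theta> (2*j) (2*j + 1) \<psi> = (\<lambda>S. - \<sigma> j * \<psi> S)"
    and \<sigma>: "\<forall>j\<in>{1..L-1}. \<sigma> j * \<sigma> j = 1"
  shows "bond \<theta> (2*L) 1 \<psi> = (\<lambda>S. (-1) ^ (L - 1) * (\<Prod>j\<in>{1..L-1}. \<sigma> j) * \<psi> S)"
proof
  fix S
  define m where "m = L - 1"
  define \<Sigma> where "\<Sigma> = (\<Prod>j\<in>{1..m}. \<sigma> j)"
  define X where "X = maj \<theta> 1 (maj \<theta> (2*L) \<psi>)"
  have L: "L = Suc m"
    using assms(1) unfolding m_def by simp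
  then have "2*L \<noteq> 1"
    by simp
  have "\<forall>j<m. maj \<theta> (2 + 2*j) (maj \<theta> (2 + 2*j + 1) \<psi>) = (\<lambda>S. (\<i> * \<sigma> (Suc j)) * \<psi> S)"
  proof (intro allI impI)
    fix j
    assume "j < m"
    then have "bond \<theta> (2 + 2*j) (2 + 2*j + 1) \<psi> = (\<lambda>S. - \<sigma> (Suc j) * \<psi> S)"
      using bulk[rule_format, of "Suc j"] unfolding m_def by simp
    from maj_pair_eq_if_bond_eq[OF this]
    show "maj \<theta> (2 + 2*j) (maj \<theta> (2 + 2*j + 1) \<psi>) = (\<lambda>S. (\<i> * \<sigma> (Suc j)) * \<psi> S)"
      by simp
  qed
  then have "maj_string \<theta> 2 m \<psi> = (\<lambda>S. (\<Prod>j<m. \<i> * \<sigma> (Suc j)) * \<psi> S)"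
    by (rule maj_string_eigen)
  then have "maj_string \<theta> 1 L \<psi> = (\<lambda>S. (\<i> ^ m * \<Sigma>) * X S)"
    unfolding L maj_string_sites_split X_def \<Sigma>_def
    by (simp add: maj_scale prod.distrib prod.atLeast1_atMost_eq)
  moreover have "maj_string \<theta> 1 L \<psi> S = \<i> ^ L * ((-1) ^ m * \<psi> S)"
    using fun_cong[OF parity, of S] unfolding maj_string_sites parity_def m_def
    by (simp add: mult.assoc)
  ultimately have "\<i> ^ m * (\<Sigma> * X S) = \<i> ^ m * (\<i> * (-1) ^ m * \<psi> S)"
    using L by (simp add: mult_ac)
  then have "\<Sigma> * X S = \<i> * (-1) ^ m * \<psi> S"
    by simp
  moreover have "\<Sigma> * \<Sigma> = 1"
    using \<sigma> unfolding \<Sigma>_def m_def prod.distrib[symmetric] by (simp add: prod.neutral)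
  ultimately have "X S = \<Sigma> * (\<i> * (-1) ^ m * \<psi> S)"
    by (metis mult.assoc mult_1)
  moreover have "bond \<theta> (2*L) 1 \<psi> S = - \<i> * X S"
    unfolding bond_def X_def maj_anticommute[of "2*L" 1, OF \<open>2*L \<noteq> 1\<close>] by simp
  ultimately show "bond \<theta> (2*L) 1 \<psi> S = (-1) ^ (L - 1) * (\<Prod>j\<in>{1..L-1}. \<sigma> j) * \<psi> S"
    unfolding \<Sigma>_def m_def by (simp add: mult_ac)
qed

fun dchain :: "real \<Rightarrow> (nat \<Rightarrow> real) \<Rightarrow> nat \<Rightarrow> nat \<Rightarrow> fop" where
  "dchain \<theta> w a 0 \<psi> = \<psi>"
| "dchain \<theta> w a (Suc n) \<psi> = dop \<theta> w a (dchain \<theta> w (Suc a) n \<psi>)"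

lemma dchain_Suc_inner: "dchain \<theta> w a (Suc n) \<psi> = dchain \<theta> w a n (dop \<theta> w (a + n) \<psi>)"
  by (induction n arbitrary: a) auto

lemma dprod_eq_dchain: "dprod \<theta> w k \<psi> = dchain \<theta> w 1 k \<psi>"
proof (induction k arbitrary: \<psi>)
  case (Suc k)
  then show ?case
    using dchain_Suc_inner[of \<theta> w 1 k \<psi>] by simp
qed simp

lemma dop_supported_in:
  assumes "supported_in A \<psi>"
  shows "supported_in (insert j (insert (Suc j) A)) (dop \<theta> w j \<psi>)"
proof -
  have "(2*j + 1) div 2 = j" "(2*j + 1 + 1) div 2 = Suc j"
    by presburger+
  then have "supported_in (insert j (insert (Suc j) A)) (maj \<theta> (2*j) \<psi>)"
    "supported_in (insert j (insert (Suc j) A)) (maj \<theta> (2*j + 1) \<psi>)"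
    using maj_supported_in[OF assms, of "2*j" \<theta>] maj_supported_in[OF assms, of "2*j + 1" \<theta>]
    unfolding supported_in_def by auto
  then show ?thesis
    unfolding supported_in_def dop_def by simp
qed

lemma dchain_vac_supported_in: "supported_in {a..a + n} (dchain \<theta> w a n vac)"
proof (induction n arbitrary: a)
  case 0
  then show ?case
    using supported_in_vac by simp
next
  case (Suc n)
  have "insert a (insert (Suc a) {Suc a..Suc a + n}) = {a..a + Suc n}"
    by auto
  then show ?case
    using dop_supported_in[OF Suc.IH[of "Suc a"], of a \<theta> w] by simp
qed

lemma dchain_vac_nonzero: "dchain \<theta> w a n vac {a..<a + n} \<noteq> 0"
proof (induction n arbitrary: a)
  case (Suc n)
  define S where "S = {a..<a + Suc n}"
  define \<phi> where "\<phi> = dchain \<theta> w (Suc a) n vac"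
  have modes: "(2*a + 1) div 2 = a" "(2*a + 1 + 1) div 2 = Suc a"
    by presburger+
  have S: "a \<in> S" "S - {a} = {Suc a..<Suc a + n}"
    unfolding S_def by auto
  have "supported_in (insert (Suc a) {Suc a..Suc a + n}) (maj \<theta> (2*a + 1) \<phi>)"
    using maj_supported_in[OF dchain_vac_supported_in, of "2*a + 1"] unfolding \<phi>_def modes .
  then have "maj \<theta> (2*a + 1) \<phi> S = 0"
    using S(1) unfolding supported_in_def by force
  moreover have "maj \<theta> (2*a) \<phi> S \<noteq> 0"
    using Suc.IH[of "Suc a"] modes(1) S by (simp add: maj_eq_mode_op mode_op_apply \<phi>_def)
  ultimately have "dchain \<theta> w a (Suc n) vac S \<noteq> 0"
    by (simp add: dop_def \<phi>_def)
  then show ?case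
    by (simp add: S_def)
qed (simp add: vac_def)

lemma parity_dchain_vac:
  "1 \<le> a \<Longrightarrow> a + n \<le> L \<Longrightarrow> parity L (dchain \<theta> w a n vac) = (\<lambda>S. (-1) ^ n * dchain \<theta> w a n vac S)"
proof (induction n arbitrary: a)
  case (Suc n)
  then have "parity L (dchain \<theta> w a (Suc n) vac)
      = (\<lambda>S. - dop \<theta> w a (parity L (dchain \<theta> w (Suc a) n vac)) S)"
    by (simp add: parity_dop)
  also have "\<dots> = (\<lambda>S. (-1) ^ Suc n * dchain \<theta> w a (Suc n) vac S)"
    using Suc by (simp add: dop_eq_dmaj dmaj_scale)
  finally show ?case .
qed (simp add: parity_vac)

lemma bond_dchain:
  assumes "a \<le> j" "j < a + n"
  shows "bond \<theta> (2*j) (2*j + 1) (dchain \<theta> w a n \<psi>) = (\<lambda>S. - sgn_factor (w j) * dchain \<theta> w a n \<psi> S)"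
  using assms
proof (induction n arbitrary: a)
  case (Suc n)
  show ?case
  proof (cases "j = a")
    case True
    then show ?thesis
      by (simp add: dop_eq_dmaj bond_dmaj_same sgn_factor_square)
  next
    case False
    then have "bond \<theta> (2*j) (2*j + 1) (dchain \<theta> w a (Suc n) \<psi>)
        = dop \<theta> w a (bond \<theta> (2*j) (2*j + 1) (dchain \<theta> w (Suc a) n \<psi>))"
      unfolding dchain.simps dop_eq_dmaj by (intro bond_dmaj_commute) auto
    also have "\<dots> = dop \<theta> w a (\<lambda>S. - sgn_factor (w j) * dchain \<theta> w (Suc a) n \<psi> S)"
      using Suc False by simp
    also have "\<dots> = (\<lambda>S. - sgn_factor (w j) * dchain \<theta> w a (Suc n) \<psi> S)"
      by (simp only: dchain.simps dop_eq_dmaj dmaj_scale)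
    finally show ?thesis .
  qed
qed simp

section \<open>A lower bound for the energy\<close>

definition fnorm2 :: "nat \<Rightarrow> fstate \<Rightarrow> real" where
  "fnorm2 L \<psi> = (\<Sum>S\<in>Pow {1..L}. (cmod (\<psi> S))\<^sup>2)"

definition finner :: "nat \<Rightarrow> fstate \<Rightarrow> fstate \<Rightarrow> complex" where
  "finner L \<phi> \<psi> = (\<Sum>S\<in>Pow {1..L}. cnj (\<phi> S) * \<psi> S)"

lemma fnorm2_pos:
  assumes "\<psi> \<in> fock L" "\<psi> \<noteq> (\<lambda>_. 0)"
  shows "fnorm2 L \<psi> > 0"
proof -
  obtain S where S: "\<psi> S \<noteq> 0"
    using assms(2) by auto
  then have "S \<in> Pow {1..L}"
    using assms(1) unfolding fock_def by auto
  then have "(cmod (\<psi> S))\<^sup>2 \<le> fnorm2 L \<psi>"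
    unfolding fnorm2_def by (intro member_le_sum) auto
  moreover have "(cmod (\<psi> S))\<^sup>2 > 0"
    using S by simp
  ultimately show ?thesis
    by linarith
qed

lemma fnorm2_scale: "fnorm2 L (\<lambda>S. c * \<psi> S) = (cmod c)\<^sup>2 * fnorm2 L \<psi>"
  unfolding fnorm2_def by (simp add: norm_mult power_mult_distrib sum_distrib_left)

lemma fnorm2_mode_op:
  assumes "j \<in> {1..L}" "cmod a = 1" "cmod b = 1"
  shows "fnorm2 L (mode_op j a b \<psi>) = fnorm2 L \<psi>"
proof -
  have "cmod (mode_op j a b \<psi> S) = cmod (\<psi> (toggle j S))" for S
    using assms by (auto simp: mode_op_apply toggle_def norm_mult)
  then have "fnorm2 L (mode_op j a b \<psi>) = (\<Sum>S\<in>Pow {1..L}. (cmod (\<psi> (toggle j S)))\<^sup>2)"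
    unfolding fnorm2_def by simp
  also have "\<dots> = fnorm2 L \<psi>"
    unfolding fnorm2_def
    by (rule sum.reindex_bij_witness[of _ "toggle j" "toggle j"]) (use assms(1) in \<open>auto simp: toggle_def\<close>)
  finally show ?thesis .
qed

lemma fnorm2_bond:
  assumes "(m + 1) div 2 \<in> {1..L}" "(n + 1) div 2 \<in> {1..L}"
  shows "fnorm2 L (bond \<theta> m n \<psi>) = fnorm2 L \<psi>"
  using assms by (simp add: bond_def fnorm2_scale maj_eq_mode_op fnorm2_mode_op)

lemma abs_Re_finner_le: "\<bar>Re (finner L \<phi> \<psi>)\<bar> \<le> (fnorm2 L \<phi> + fnorm2 L \<psi>) / 2"
proof -
  have "\<bar>Re (cnj (\<phi> S) * \<psi> S)\<bar> \<le> ((cmod (\<phi> S))\<^sup>2 + (cmod (\<psi> S))\<^sup>2) / 2" for S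
  proof -
    have "\<bar>Re (cnj (\<phi> S) * \<psi> S)\<bar> \<le> cmod (\<phi> S) * cmod (\<psi> S)"
      using abs_Re_le_cmod[of "cnj (\<phi> S) * \<psi> S"] by (simp add: norm_mult)
    also have "\<dots> \<le> ((cmod (\<phi> S))\<^sup>2 + (cmod (\<psi> S))\<^sup>2) / 2"
      using sum_squares_ge_zero[of "cmod (\<phi> S) - cmod (\<psi> S)" 0]
      by (simp add: power2_eq_square algebra_simps)
    finally show ?thesis .
  qed
  note pointwise = this
  have "\<bar>Re (finner L \<phi> \<psi>)\<bar> = \<bar>\<Sum>S\<in>Pow {1..L}. Re (cnj (\<phi> S) * \<psi> S)\<bar>"
    unfolding finner_def by (simp only: Re_sum)
  also have "\<dots> \<le> (\<Sum>S\<in>Pow {1..L}. \<bar>Re (cnj (\<phi> S) * \<psi> S)\<bar>)"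
    by (rule sum_abs)
  also have "\<dots> \<le> (\<Sum>S\<in>Pow {1..L}. ((cmod (\<phi> S))\<^sup>2 + (cmod (\<psi> S))\<^sup>2) / 2)"
    using pointwise by (rule sum_mono)
  also have "\<dots> = (fnorm2 L \<phi> + fnorm2 L \<psi>) / 2"
    by (simp only: fnorm2_def sum.distrib[symmetric] sum_divide_distrib)
  finally show ?thesis .
qed

lemma finner_sum_scale:
  "finner L \<phi> (\<lambda>S. \<Sum>j\<in>J. c j * \<psi> j S) = (\<Sum>j\<in>J. c j * finner L \<phi> (\<psi> j))"
  unfolding finner_def by (simp add: sum_distrib_left sum.swap[of _ J] mult_ac)

lemma finner_self_scale: "finner L \<psi> (\<lambda>S. \<mu> * \<psi> S) = \<mu> * of_real (fnorm2 L \<psi>)"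
proof -
  have pointwise: "cnj (\<psi> S) * (\<mu> * \<psi> S) = \<mu> * of_real ((cmod (\<psi> S))\<^sup>2)" for S
    unfolding complex_norm_square by (simp only: mult_ac)
  show ?thesis
    unfolding finner_def fnorm2_def of_real_sum sum_distrib_left pointwise ..
qed

definition bond_term :: "nat \<Rightarrow> real \<Rightarrow> nat \<Rightarrow> fop" where
  "bond_term L \<theta> j = (if j = L then bond \<theta> (2*L) 1 else bond \<theta> (2*j) (2*j + 1))"

lemma ham_eq_sum_bond_terms:
  assumes "L \<ge> 1"
  shows "ham L \<theta> w \<psi> = (\<lambda>S. \<Sum>j=1..L. of_real (w j) * bond_term L \<theta> j \<psi> S)"
proof
  fix S
  have "{1..L} = insert L {1..L-1}" "L \<notin> {1..L-1}"
    using assms by auto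
  moreover have "(\<Sum>j=1..L-1. of_real (w j) * bond_term L \<theta> j \<psi> S)
      = (\<Sum>j=1..L-1. of_real (w j) * bond \<theta> (2*j) (2*j + 1) \<psi> S)"
    by (rule sum.cong) (auto simp: bond_term_def)
  ultimately show "ham L \<theta> w \<psi> S = (\<Sum>j=1..L. of_real (w j) * bond_term L \<theta> j \<psi> S)"
    by (simp add: ham_def bond_def bond_term_def mult.assoc)
qed

lemma fnorm2_bond_term: "j \<in> {1..L} \<Longrightarrow> fnorm2 L (bond_term L \<theta> j \<psi>) = fnorm2 L \<psi>"
  unfolding bond_term_def by (auto intro: fnorm2_bond)

lemma Re_finner_ham_ge:
  assumes "L \<ge> 1"
  shows "- (\<Sum>j=1..L. \<bar>w j\<bar>) * fnorm2 L \<phi> \<le> Re (finner L \<phi> (ham L \<theta> w \<phi>))"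
proof -
  have "- \<bar>w j\<bar> * fnorm2 L \<phi> \<le> w j * Re (finner L \<phi> (bond_term L \<theta> j \<phi>))" if "j \<in> {1..L}" for j
  proof -
    have "\<bar>Re (finner L \<phi> (bond_term L \<theta> j \<phi>))\<bar> \<le> fnorm2 L \<phi>"
      using abs_Re_finner_le[of L \<phi> "bond_term L \<theta> j \<phi>"] fnorm2_bond_term[OF that] by simp
    then have "\<bar>w j * Re (finner L \<phi> (bond_term L \<theta> j \<phi>))\<bar> \<le> \<bar>w j\<bar> * fnorm2 L \<phi>"
      unfolding abs_mult by (rule mult_left_mono) simp
    then show ?thesis
      by linarith
  qed
  note pointwise = this
  have "- (\<Sum>j=1..L. \<bar>w j\<bar>) * fnorm2 L \<phi> = (\<Sum>j=1..L. - \<bar>w j\<bar> * fnorm2 L \<phi>)"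
    by (simp add: sum_distrib_right sum_negf)
  also have "\<dots> \<le> (\<Sum>j=1..L. w j * Re (finner L \<phi> (bond_term L \<theta> j \<phi>)))"
    using pointwise by (rule sum_mono)
  also have "\<dots> = Re (finner L \<phi> (ham L \<theta> w \<phi>))"
    using assms by (simp add: ham_eq_sum_bond_terms finner_sum_scale Re_sum)
  finally show ?thesis .
qed

lemma ham_eigenvalue_ge:
  assumes "L \<ge> 1" "\<phi> \<in> fock L" "\<phi> \<noteq> (\<lambda>_. 0)" "ham L \<theta> w \<phi> = (\<lambda>S. \<mu> * \<phi> S)"
  shows "- (\<Sum>j=1..L. \<bar>w j\<bar>) \<le> Re \<mu>"
proof -
  have "- (\<Sum>j=1..L. \<bar>w j\<bar>) * fnorm2 L \<phi> \<le> Re \<mu> * fnorm2 L \<phi>"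
    using Re_finner_ham_ge[OF assms(1), of w \<phi> \<theta>] unfolding assms(4) finner_self_scale by simp
  then show ?thesis
    using fnorm2_pos[OF assms(2,3)] mult_le_cancel_right_pos by blast
qed

lemma ham_eq_if_bonds_saturated:
  assumes "L \<ge> 1" "\<forall>j\<in>{1..L}. bond_term L \<theta> j \<psi> = (\<lambda>S. - sgn_factor (w j) * \<psi> S)"
  shows "ham L \<theta> w \<psi> = (\<lambda>S. of_real (- (\<Sum>j=1..L. \<bar>w j\<bar>)) * \<psi> S)"
proof
  fix S
  have "of_real (w j) * bond_term L \<theta> j \<psi> S = - of_real \<bar>w j\<bar> * \<psi> S" if "j \<in> {1..L}" for j
    using assms(2) that by (simp add: sgnbit_def)
  then have "(\<Sum>j=1..L. of_real (w j) * bond_term L \<theta> j \<psi> S) = (\<Sum>j=1..L. - of_real \<bar>w j\<bar> * \<psi> S)"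
    by (rule sum.cong[OF refl])
  then show "ham L \<theta> w \<psi> S = of_real (- (\<Sum>j=1..L. \<bar>w j\<bar>)) * \<psi> S"
    unfolding ham_eq_sum_bond_terms[OF assms(1)] by (simp add: sum_distrib_right sum_negf)
qed

lemma ground_state_if_bonds_saturated:
  assumes "L \<ge> 1" "\<psi> \<in> fock L" "\<psi> \<noteq> (\<lambda>_. 0)"
    and bulk: "\<forall>j\<in>{1..L-1}. bond \<theta> (2*j) (2*j + 1) \<psi> = (\<lambda>S. - sgn_factor (w j) * \<psi> S)"
    and boundary: "bond \<theta> (2*L) 1 \<psi> = (\<lambda>S. - sgn_factor (w L) * \<psi> S)"
  shows "ground_state L (ham L \<theta> w) \<psi>"
proof -
  have "\<forall>j\<in>{1..L}. bond_term L \<theta> j \<psi> = (\<lambda>S. - sgn_factor (w j) * \<psi> S)"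
    using bulk boundary by (auto simp: bond_term_def)
  then show ?thesis
    unfolding ground_state_def
    using assms(2,3) ham_eq_if_bonds_saturated[OF assms(1)] ham_eigenvalue_ge[OF assms(1)] by blast
qed

lemma ground_state_dbd:
  assumes L: "L \<ge> 1" and "\<psi> \<in> fock L" "\<psi> \<noteq> (\<lambda>_. 0)"
    and bulk: "\<forall>j\<in>{1..L-1}. bond \<theta> (2*j) (2*j + 1) \<psi> = (\<lambda>S. - sgn_factor (w j) * \<psi> S)"
    and boundary: "bond \<theta> (2*L) 1 \<psi> = (\<lambda>S. sgn_factor (w L) * \<psi> S)"
  shows "ground_state L (ham L \<theta> w) (dbd L \<theta> w \<psi>)"
proof (rule ground_state_if_bonds_saturated[OF L])
  have dbd_maj: "dbd L \<theta> w \<psi> = maj \<theta> (2*L) \<psi>"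
    unfolding dbd_eq_dmaj by (rule dmaj_eq_maj_if_bond_eq[OF boundary sgn_factor_square])
  have "(2*L + 1) div 2 \<in> {1..L}"
    using L by auto
  then show "dbd L \<theta> w \<psi> \<in> fock L"
    unfolding dbd_maj using assms(2) by (rule maj_in_fock[rotated])
  show "dbd L \<theta> w \<psi> \<noteq> (\<lambda>_. 0)"
    using assms(3) maj_maj_same[of \<theta> "2*L" \<psi>] maj_zero[of \<theta> "2*L"] unfolding dbd_maj by metis
  show "\<forall>j\<in>{1..L-1}. bond \<theta> (2*j) (2*j + 1) (dbd L \<theta> w \<psi>)
      = (\<lambda>S. - sgn_factor (w j) * dbd L \<theta> w \<psi> S)"
  proof
    fix j
    assume j: "j \<in> {1..L-1}"
    then have "bond \<theta> (2*j) (2*j + 1) (dbd L \<theta> w \<psi>)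
        = dbd L \<theta> w (bond \<theta> (2*j) (2*j + 1) \<psi>)"
      unfolding dbd_eq_dmaj by (intro bond_dmaj_commute) auto
    then show "bond \<theta> (2*j) (2*j + 1) (dbd L \<theta> w \<psi>) = (\<lambda>S. - sgn_factor (w j) * dbd L \<theta> w \<psi> S)"
      using bulk j by (simp only: dbd_eq_dmaj dmaj_scale)
  qed
  show "bond \<theta> (2*L) 1 (dbd L \<theta> w \<psi>) = (\<lambda>S. - sgn_factor (w L) * dbd L \<theta> w \<psi> S)"
    unfolding dbd_eq_dmaj using L by (intro bond_dmaj_same sgn_factor_square) simp
qed

lemma boundary_sign:
  assumes "L \<ge> 1"
  shows "(-1) ^ (L - 1) * (\<Prod>j\<in>{1..L-1}. sgn_factor (w j))
    = (if even L = even (sP L w) then -1 else 1) * sgn_factor (w L)"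
proof -
  have "{1..L} = insert L {1..L-1}" "L \<notin> {1..L-1}"
    using assms by auto
  then have "sP L w = (\<Sum>j=1..L-1. sgnbit (w j)) + sgnbit (w L)"
    unfolding sP_def by simp
  moreover have "(\<Prod>j\<in>{1..L-1}. sgn_factor (w j)) = (-1) ^ (\<Sum>j=1..L-1. sgnbit (w j))"
    by (simp add: power_sum)
  moreover have "even (L - 1) \<longleftrightarrow> odd L"
    using assms by presburger
  ultimately show ?thesis
    by (auto simp: minus_one_power_iff)
qed

theorem proposition3p9:
  fixes L :: nat and \<theta> :: real and w :: "nat \<Rightarrow> real"
  assumes "L \<ge> 2"
    and "\<forall>j\<in>{1..L}. w j \<noteq> 0"
  shows "(even L = even (sP L w) \<longrightarrow>
            ground_state L (ham L \<theta> w) (dprod \<theta> w (L - 1) vac))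
       \<and> (even L \<noteq> even (sP L w) \<longrightarrow>
            ground_state L (ham L \<theta> w) (dbd L \<theta> w (dprod \<theta> w (L - 1) vac)))"
proof -
  define \<psi> where "\<psi> = dprod \<theta> w (L - 1) vac"
  have L: "L \<ge> 1"
    using assms(1) by simp
  have \<psi>_dchain: "\<psi> = dchain \<theta> w 1 (L - 1) vac"
    unfolding \<psi>_def dprod_eq_dchain ..
  have fock: "\<psi> \<in> fock L"
    using dchain_vac_supported_in[of 1 "L - 1" \<theta> w] L unfolding \<psi>_dchain fock_iff_supported_in by simp
  have nonzero: "\<psi> \<noteq> (\<lambda>_. 0)"
    using dchain_vac_nonzero[of \<theta> w 1 "L - 1"] unfolding \<psi>_dchain by auto
  have bulk: "\<forall>j\<in>{1..L-1}. bond \<theta> (2*j) (2*j + 1) \<psi> = (\<lambda>S. - sgn_factor (w j) * \<psi> S)"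
    unfolding \<psi>_dchain using L by (intro ballI bond_dchain) auto
  have parity: "parity L \<psi> = (\<lambda>S. (-1) ^ (L - 1) * \<psi> S)"
    unfolding \<psi>_dchain using L by (intro parity_dchain_vac) auto
  have "bond \<theta> (2*L) 1 \<psi>
      = (\<lambda>S. (if even L = even (sP L w) then -1 else 1) * sgn_factor (w L) * \<psi> S)"
    using bond_boundary_eigen[OF L parity bulk] sgn_factor_square boundary_sign[OF L] by simp
  then show ?thesis
    using ground_state_if_bonds_saturated[OF L fock nonzero bulk]
      ground_state_dbd[OF L fock nonzero bulk] unfolding \<psi>_def by auto
qed

end
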